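(* Let $g$ be analytic on $\mathbb{D}$ and suppose there is $x\in(0,1)$ with $g(x)=x$ and $g(-x)=-x$. Then $\operatorname{Diam} g(\mathbb{D})\ge 2$, with equality if and only if $g(z)=z$ for all $z\in\mathbb{D}$.
   Context: $\mathbb{D}$ is the open unit disk; $\operatorname{Diam}E=\sup_{z,w\in E}|z-w|$. *)

theory Defs
  imports "HOL-Complex_Analysis.Complex_Analysis"
begin

text \<open>Diameter of a set of complex numbers, valued in the extended reals
  (so that unbounded sets have diameter infinity): sup of distances.\<close>
definition Diam :: "complex set \<Rightarrow> ereal" where
  "Diam E = (SUP z\<in>E. SUP w\<in>E. ereal (cmod (z - w)))"

end

theory Submission
  imports Defs
begin

text \<open>If \<open>Diam (g ` \<bbbD>) \<le> 2\<close>, the odd part \<open>(g u - g (-u)) / 2\<close> maps \<open>\<bbbD>\<close> into the closed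
  unit disc, vanishes at \<open>0\<close> and fixes \<open>x\<close>, so it is the identity by Schwarz's lemma.
  For fixed \<open>z \<noteq> 0\<close> the function \<open>l \<mapsto> (g (z l) - g (-z)) / (2 z)\<close> then maps \<open>\<bbbD>\<close> into
  the closed unit disc (Schwarz again) and takes the value \<open>1\<close> at the boundary point
  \<open>l = 1\<close>, so its derivative \<open>g' z / 2\<close> there is real. A holomorphic function with real
  values is constant, hence \<open>g\<close> is affine and the fixed points \<open>\<plusminus>x\<close> force \<open>g = id\<close>,
  whose image has diameter exactly \<open>2\<close>.\<close>

lemma norm_diff_le_Diam: "z \<in> E \<Longrightarrow> w \<in> E \<Longrightarrow> ereal (cmod (z - w)) \<le> Diam E"
  unfolding Diam_def by (blast intro: SUP_upper2)

lemma Diam_le_iff: "Diam E \<le> ereal r \<longleftrightarrow> (\<forall>z\<in>E. \<forall>w\<in>E. cmod (z - w) \<le> r)"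
  by (simp add: Diam_def SUP_le_iff)

lemma Diam_unit_ball: "Diam (ball 0 1) = 2"
proof (rule antisym)
  have "cmod (z - w) \<le> 2" if "z \<in> ball 0 1" "w \<in> ball 0 1" for z w
    using that norm_triangle_ineq4[of z w] by simp
  then show "Diam (ball 0 1) \<le> 2"
    using Diam_le_iff[of _ 2] by simp
  show "2 \<le> Diam (ball 0 1)"
  proof (rule dense_le_bounded[of 0])
    fix y :: ereal
    assume "0 < y" "y < 2"
    then obtain t where t: "y = ereal t" "0 < t" "t < 2"
      by (cases y) auto
    have "ereal (cmod (of_real (t / 2) - of_real (- t / 2))) \<le> Diam (ball 0 1)"
      by (rule norm_diff_le_Diam) (use t in auto)
    then show "y \<le> Diam (ball 0 1)"
      using t by (simp flip: of_real_diff)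
  qed simp
qed

lemma Re_derivative_along_ray:
  fixes f :: "complex \<Rightarrow> complex"
  assumes "(f has_field_derivative c) (at a)"
  shows "((\<lambda>t. Re (f (a + of_real t * w))) has_real_derivative Re (c * w)) (at 0)"
proof -
  have "((\<lambda>t. a + of_real t * w) has_vector_derivative w) (at 0)"
    by (auto intro!: derivative_eq_intros)
  then have "((\<lambda>t. f (a + of_real t * w)) has_vector_derivative w * c) (at 0)"
    using field_vector_diff_chain_at[of "\<lambda>t. a + of_real t * w" w 0 f c] assms
    by (simp add: o_def)
  then show ?thesis
    by (auto dest!: has_field_derivative_Re simp: mult.commute)
qed

lemma Re_derivative_le_0_at_boundary_max:
  fixes f :: "complex \<Rightarrow> complex"
  assumes deriv: "(f has_field_derivative c) (at 1)" and f1: "Re (f 1) = 1"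
    and le1: "\<And>z. z \<in> ball 0 1 \<Longrightarrow> Re (f z) \<le> 1"
  shows "Re (c * Complex (-1) s) \<le> 0"
proof (rule ccontr)
  define w where "w = Complex (-1) s"
  assume "\<not> Re (c * Complex (-1) s) \<le> 0"
  then obtain d where d: "d > 0"
    and incr: "\<And>h. 0 < h \<Longrightarrow> h < d \<Longrightarrow> 1 < Re (f (1 + of_real h * w))"
    using DERIV_pos_inc_right[OF Re_derivative_along_ray[OF deriv, of w]] f1 by (auto simp: w_def)
  define h where "h = min (d / 2) (1 / (1 + s\<^sup>2))"
  have s2: "0 < 1 + s\<^sup>2"
    by (simp add: add_pos_nonneg)
  then have h: "0 < h" "h < d"
    using d by (auto simp: h_def)
  have "h \<le> 1 / (1 + s\<^sup>2)"
    by (simp add: h_def)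
  then have "h * (1 + s\<^sup>2) \<le> 1"
    using s2 by (simp add: pos_le_divide_eq)
  have "(1 - h)\<^sup>2 + (h * s)\<^sup>2 = 1 - h * (2 - h * (1 + s\<^sup>2))"
    by (simp add: power2_eq_square algebra_simps)
  also have "\<dots> < 1"
    using h \<open>h * (1 + s\<^sup>2) \<le> 1\<close> by simp
  finally have "1 + of_real h * w \<in> ball 0 1"
    by (simp add: w_def cmod_def)
  then show False
    using incr[OF h(1,2)] le1 by fastforce
qed

lemma derivative_in_Reals_at_boundary_max:
  fixes f :: "complex \<Rightarrow> complex"
  assumes "(f has_field_derivative c) (at 1)" "Re (f 1) = 1"
    and "\<And>z. z \<in> ball 0 1 \<Longrightarrow> Re (f z) \<le> 1"
  shows "c \<in> \<real>"
proof (rule ccontr)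
  assume "c \<notin> \<real>"
  then have "Im c \<noteq> 0" by (simp add: complex_is_Real_iff)
  have "Re (c * Complex (-1) (- (\<bar>Re c\<bar> + 1) / Im c)) \<le> 0"
    by (rule Re_derivative_le_0_at_boundary_max[OF assms])
  with \<open>Im c \<noteq> 0\<close> show False by simp
qed

lemma norm_less_1_if_norm_le_1:
  fixes f :: "complex \<Rightarrow> complex"
  assumes holf: "f holomorphic_on ball 0 1" and f0: "f 0 = 0"
    and le1: "\<And>z. z \<in> ball 0 1 \<Longrightarrow> norm (f z) \<le> 1"
    and z: "z \<in> ball 0 1"
  shows "norm (f z) < 1"
proof (rule ccontr)
  assume "\<not> norm (f z) < 1"
  with le1 z have "norm (f z) = 1" by fastforce
  with le1 have "f constant_on ball 0 1"
    by (intro maximum_modulus_principle[OF holf _ _ _ _ z]) auto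
  then have "f z = f 0"
    using z by (auto simp: constant_on_def)
  with f0 \<open>norm (f z) = 1\<close> show False by simp
qed

lemma holomorphic_on_unit_ball_compose_mult:
  fixes g :: "complex \<Rightarrow> complex"
  assumes "g holomorphic_on ball 0 1" "norm c \<le> 1"
  shows "(\<lambda>u. g (c * u)) holomorphic_on ball 0 1"
proof -
  have "c * u \<in> ball 0 1" if "u \<in> ball 0 1" for u
    using that assms(2) mult_left_le_one_le[of "norm u" "norm c"] by (simp add: norm_mult)
  then have "(g \<circ> (\<lambda>u. c * u)) holomorphic_on ball 0 1"
    by (intro holomorphic_on_compose_gen[OF _ assms(1)] holomorphic_intros) auto
  then show ?thesis
    by (simp add: o_def)
qed

lemma odd_part_eq_id:
  fixes g :: "complex \<Rightarrow> complex"
  assumes holg: "g holomorphic_on ball 0 1"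
    and bd: "\<And>z w. z \<in> ball 0 1 \<Longrightarrow> w \<in> ball 0 1 \<Longrightarrow> norm (g z - g w) \<le> 2"
    and x: "x \<in> ball 0 1" "x \<noteq> 0" and gx: "g x - g (- x) = 2 * x"
    and u: "u \<in> ball 0 1"
  shows "g u - g (- u) = 2 * u"
proof -
  define h where "h u = (g u - g (- u)) / 2" for u
  have holh: "h holomorphic_on ball 0 1"
    using holomorphic_on_unit_ball_compose_mult[OF holg, of "-1"] holg
    unfolding h_def by (auto intro!: holomorphic_intros)
  have h0: "h 0 = 0"
    by (simp add: h_def)
  have "norm (h z) \<le> 1" if "z \<in> ball 0 1" for z
    using bd[of z "- z"] that by (simp add: h_def norm_divide)
  then have "norm (h z) < 1" if "norm z < 1" for z
    using norm_less_1_if_norm_le_1[OF holh h0] that by simp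
  moreover have "h x = x"
    using gx by (simp add: h_def)
  ultimately obtain \<alpha> where \<alpha>: "\<And>z. norm z < 1 \<Longrightarrow> h z = \<alpha> * z"
    using Schwarz_Lemma(3)[OF holh h0] x by (metis mem_ball_0)
  with \<open>h x = x\<close> x have "\<alpha> = 1"
    by (metis mem_ball_0 mult_cancel_right2)
  with \<alpha> u show ?thesis
    by (simp add: h_def)
qed

lemma deriv_in_Reals_if_odd_part_id:
  fixes g :: "complex \<Rightarrow> complex"
  assumes holg: "g holomorphic_on ball 0 1"
    and bd: "\<And>z w. z \<in> ball 0 1 \<Longrightarrow> w \<in> ball 0 1 \<Longrightarrow> norm (g z - g w) \<le> 2"
    and odd: "g z - g (- z) = 2 * z"
    and z: "z \<in> ball 0 1" "z \<noteq> 0"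
  shows "deriv g z \<in> \<real>"
proof -
  define Q where "Q l = (g (z * l) - g (- z)) / (2 * z)" for l
  have Q_le_1: "norm (Q l) \<le> 1" if l: "l \<in> ball 0 1" for l
  proof -
    define F where "F u = (g (l * u) - g (- u)) / 2" for u
    have holF: "F holomorphic_on ball 0 1"
      using holomorphic_on_unit_ball_compose_mult[OF holg, of l]
        holomorphic_on_unit_ball_compose_mult[OF holg, of "-1"] l
      unfolding F_def by (auto intro!: holomorphic_intros)
    have F0: "F 0 = 0"
      by (simp add: F_def)
    have "norm (F u) \<le> 1" if "u \<in> ball 0 1" for u
      using bd[of "l * u" "- u"] that l mult_strict_mono'[of "norm l" 1 "norm u" 1]
      by (simp add: F_def norm_divide norm_mult)
    then have "norm (F z) \<le> norm z"
      using Schwarz_Lemma(1)[OF holF F0] norm_less_1_if_norm_le_1[OF holF F0] z by simp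
    then show ?thesis
      using z by (simp add: Q_def F_def norm_divide norm_mult divide_le_eq mult.commute)
  qed
  have "(g has_field_derivative deriv g z) (at (z * 1))"
    using holomorphic_derivI[OF holg] z by simp
  then have "((\<lambda>l. g (z * l)) has_field_derivative deriv g z * z) (at 1)"
    by (rule DERIV_chain2[OF _ DERIV_cmult_Id])
  then have "(Q has_field_derivative (deriv g z * z - 0) / (2 * z)) (at 1)"
    unfolding Q_def by (intro DERIV_cdivide DERIV_diff DERIV_const)
  then have "(Q has_field_derivative deriv g z / 2) (at 1)"
    using z by simp
  moreover have "Re (Q 1) = 1"
    using odd z by (simp add: Q_def)
  moreover have "Re (Q l) \<le> 1" if "l \<in> ball 0 1" for l
    using complex_Re_le_cmod[of "Q l"] Q_le_1[OF that] by linarith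
  ultimately have "deriv g z / 2 \<in> \<real>"
    by (rule derivative_in_Reals_at_boundary_max)
  then show ?thesis
    by (metis Reals_mult Reals_numeral nonzero_eq_divide_eq zero_neq_numeral)
qed

lemma open_subset_Reals_empty:
  assumes "open (U :: complex set)" "U \<subseteq> \<real>"
  shows "U = {}"
proof (rule ccontr)
  assume "U \<noteq> {}"
  then obtain u e where "e > 0" "ball u e \<subseteq> U"
    using assms(1) open_contains_ball by blast
  moreover have "u + \<i> * of_real (e / 2) \<in> ball u e"
    using \<open>e > 0\<close> by (simp add: dist_norm norm_mult)
  ultimately have "u + \<i> * of_real (e / 2) \<in> U" "u \<in> U"
    by auto
  then have "u + \<i> * of_real (e / 2) \<in> \<real>" "u \<in> \<real>"
    using assms(2) by auto
  with \<open>e > 0\<close> show False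
    by (auto simp: complex_is_Real_iff)
qed

lemma holomorphic_constant_on_if_Reals_valued:
  assumes "f holomorphic_on S" "open S" "connected S" "open U" "U \<subseteq> S"
    and "U \<noteq> {}" "f ` U \<subseteq> \<real>"
  shows "f constant_on S"
  using open_mapping_thm[OF assms(1-5)] open_subset_Reals_empty assms(6,7) by blast

lemma eq_id_if_image_diameter_le_2:
  fixes g :: "complex \<Rightarrow> complex"
  assumes holg: "g holomorphic_on ball 0 1"
    and bd: "\<And>z w. z \<in> ball 0 1 \<Longrightarrow> w \<in> ball 0 1 \<Longrightarrow> norm (g z - g w) \<le> 2"
    and x: "x \<in> ball 0 1" "x \<noteq> 0" and gx: "g x = x" and gmx: "g (- x) = - x"
    and z: "z \<in> ball 0 1"
  shows "g z = z"
proof -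
  have "g x - g (- x) = 2 * x"
    using gx gmx by simp
  then have odd: "g u - g (- u) = 2 * u" if "u \<in> ball 0 1" for u
    using odd_part_eq_id[OF holg bd x _ that] by blast
  have "deriv g constant_on ball 0 1"
  proof (rule holomorphic_constant_on_if_Reals_valued)
    show "deriv g holomorphic_on ball 0 1"
      by (rule holomorphic_deriv[OF holg]) simp
    show "deriv g ` (ball 0 1 - {0}) \<subseteq> \<real>"
      using deriv_in_Reals_if_odd_part_id[OF holg bd odd] by (intro image_subsetI) auto
    show "ball 0 1 - {0 :: complex} \<noteq> {}"
      using x by auto
    show "open (ball 0 1 - {0 :: complex})"
      by (simp add: open_Diff)
  qed auto
  then obtain c where c: "\<And>u. u \<in> ball 0 1 \<Longrightarrow> deriv g u = c"
    by (auto simp: constant_on_def)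
  have "(\<lambda>u. g u - c * u) constant_on ball 0 1"
  proof (rule has_field_derivative_0_imp_constant_on)
    fix u :: complex
    assume u: "u \<in> ball 0 1"
    have "(g has_field_derivative c) (at u)"
      using holomorphic_derivI[OF holg _ u] c[OF u] by simp
    then show "((\<lambda>u. g u - c * u) has_field_derivative 0) (at u)"
      by (auto intro!: derivative_eq_intros)
  qed auto
  then obtain d where d: "\<And>u. u \<in> ball 0 1 \<Longrightarrow> g u - c * u = d"
    by (auto simp: constant_on_def)
  have "- x \<in> ball 0 1"
    using x by simp
  then have "x - c * x = d" "- x + c * x = d"
    using d[OF x(1)] d[of "- x"] gx gmx by simp_all
  then have "d = 0" "x = c * x"
    by (auto simp: algebra_simps)
  then have "c = 1"
    using x(2) by simp
  then show ?thesis
    using d[OF z] \<open>d = 0\<close> by simp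
qed

theorem mainTheorem7:
  fixes g :: "complex \<Rightarrow> complex" and x :: real
  assumes "g holomorphic_on ball 0 1"
    and "0 < x" and "x < 1"
    and "g (complex_of_real x) = complex_of_real x"
    and "g (- complex_of_real x) = - complex_of_real x"
  shows "Diam (g ` ball 0 1) \<ge> 2 \<and>
         (Diam (g ` ball 0 1) = 2 \<longleftrightarrow> (\<forall>z\<in>ball 0 1. g z = z))"
proof -
  have id_if_le_2: "\<forall>z\<in>ball 0 1. g z = z" if "Diam (g ` ball 0 1) \<le> ereal 2"
  proof -
    have "norm (g z - g w) \<le> 2" if "z \<in> ball 0 1" "w \<in> ball 0 1" for z w
      using \<open>Diam (g ` ball 0 1) \<le> ereal 2\<close> that by (auto simp only: Diam_le_iff image_iff)
    moreover have "complex_of_real x \<in> ball 0 1" "complex_of_real x \<noteq> 0"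
      using assms(2,3) by auto
    ultimately show ?thesis
      using eq_id_if_image_diameter_le_2[OF assms(1) _ _ _ assms(4,5)] by blast
  qed
  have Diam_if_id: "Diam (g ` ball 0 1) = 2" if "\<forall>z\<in>ball 0 1. g z = z"
  proof -
    from that have "g ` ball 0 1 = ball 0 1"
      by force
    then show ?thesis
      by (simp add: Diam_unit_ball)
  qed
  show ?thesis
  proof (cases "Diam (g ` ball 0 1) \<le> 2")
    case True
    then show ?thesis
      using id_if_le_2 Diam_if_id by auto
  next
    case False
    then show ?thesis
      using Diam_if_id by auto
  qed
qed

end
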